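(* Let $\mathcal{B}$ be a $\sigma$-algebra on a nonempty set $E$ and let $\nu,\tau$ be $\sigma$-maxitive measures on $\mathcal{B}$, with $\tau$ $\sigma$-principal. Then $\nu\ll\tau$ if and only if $\nu\lll\tau$. In this situation, the relative density of $\nu$ with respect to $\tau$ is unique $\tau$-almost everywhere.
   Context: A $\sigma$-maxitive measure on $\mathcal{B}$ is a map $\nu:\mathcal{B}\to[0,\infty]$ with $\nu(\emptyset)=0$, $\nu(B\cup B')=\max(\nu(B),\nu(B'))$, and $\nu(\bigcup_nB_n)=\lim_n\nu(B_n)$ for nondecreasing sequences in $\mathcal{B}$. A subset $N\subset E$ is $\tau$-negligible if $N\subset G$ for some $G\in\mathcal{B}$ with $\tau(G)=0$; a property holds $\tau$-almost everywhere if it holds outside a $\tau$-negligible set. A $\sigma$-ideal of $\mathcal{B}$ is a nonempty $\mathcal{I}\subset\mathcal{B}$ closed under countable unions and such that $B\subset I\in\mathcal{I}$, $B\in\mathcal{B}$ imply $B\in\mathcal{I}$. $\tau$ is $\sigma$-principal if for every $\sigma$-ideal $\mathcal{I}$ of $\mathcal{B}$ there is $L\in\mathcal{I}$ such that $S\setminus L$ is $\tau$-negligible for all $S\in\mathcal{I}$. A map $f:E\to[0,\infty]$ is $\mathcal{B}$-measurable if $\{f>t\}\in\mathcal{B}$ for all $t\geq0$; its $\tau$-essential supremum on $B$ is $\bigoplus^{\tau}_{x\in B}f(x)=\inf\{t>0:B\cap\{f>t\}\text{ is }\tau\text{-negligible}\}$. We write $\nu\ll\tau$ if $\tau(B)=0\Rightarrow\nu(B)=0$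 for all $B\in\mathcal{B}$, and $\nu\lll\tau$ if there is a $\mathcal{B}$-measurable $f$ (a relative density of $\nu$ w.r.t. $\tau$) with $\nu(B)=\bigoplus^{\tau}_{x\in B}f(x)$ for all $B\in\mathcal{B}$. *)

theory Defs
  imports "HOL-Analysis.Analysis"
begin

definition sigma_maxitive :: "'a set set \<Rightarrow> ('a set \<Rightarrow> ennreal) \<Rightarrow> bool" where
  "sigma_maxitive B \<nu> \<longleftrightarrow>
     \<nu> {} = 0 \<and>
     (\<forall>A\<in>B. \<forall>A'\<in>B. \<nu> (A \<union> A') = max (\<nu> A) (\<nu> A')) \<and>
     (\<forall>S::nat \<Rightarrow> 'a set. range S \<subseteq> B \<longrightarrow> incseq S \<longrightarrow>
        (\<lambda>n. \<nu> (S n)) \<longlonglongrightarrow> \<nu> (\<Union>n. S n))"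

definition negligible :: "'a set set \<Rightarrow> ('a set \<Rightarrow> ennreal) \<Rightarrow> 'a set \<Rightarrow> bool" where
  "negligible B \<tau> N \<longleftrightarrow> (\<exists>G\<in>B. N \<subseteq> G \<and> \<tau> G = 0)"

definition sigma_ideal :: "'a set set \<Rightarrow> 'a set set \<Rightarrow> bool" where
  "sigma_ideal B I \<longleftrightarrow>
     I \<noteq> {} \<and> I \<subseteq> B \<and>
     (\<forall>S::nat \<Rightarrow> 'a set. range S \<subseteq> I \<longrightarrow> (\<Union>n. S n) \<in> I) \<and>
     (\<forall>A\<in>B. \<forall>J\<in>I. A \<subseteq> J \<longrightarrow> A \<in> I)"

definition sigma_principal :: "'a set set \<Rightarrow> ('a set \<Rightarrow> ennreal) \<Rightarrow> bool" where
  "sigma_principal B \<tau> \<longleftrightarrow>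
     (\<forall>I. sigma_ideal B I \<longrightarrow> (\<exists>L\<in>I. \<forall>S\<in>I. negligible B \<tau> (S - L)))"

definition B_measurable :: "'a set \<Rightarrow> 'a set set \<Rightarrow> ('a \<Rightarrow> ennreal) \<Rightarrow> bool" where
  "B_measurable E B f \<longleftrightarrow> (\<forall>t::ennreal. {x\<in>E. f x > t} \<in> B)"

definition ess_sup :: "'a set set \<Rightarrow> ('a set \<Rightarrow> ennreal) \<Rightarrow> ('a \<Rightarrow> ennreal) \<Rightarrow> 'a set \<Rightarrow> ennreal" where
  "ess_sup B \<tau> f A = Inf {t::ennreal. t > 0 \<and> negligible B \<tau> (A \<inter> {x. f x > t})}"

definition abs_cont :: "'a set set \<Rightarrow> ('a set \<Rightarrow> ennreal) \<Rightarrow> ('a set \<Rightarrow> ennreal) \<Rightarrow> bool" where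
  "abs_cont B \<nu> \<tau> \<longleftrightarrow> (\<forall>A\<in>B. \<tau> A = 0 \<longrightarrow> \<nu> A = 0)"

definition is_rel_density :: "'a set \<Rightarrow> 'a set set \<Rightarrow> ('a set \<Rightarrow> ennreal) \<Rightarrow> ('a set \<Rightarrow> ennreal) \<Rightarrow> ('a \<Rightarrow> ennreal) \<Rightarrow> bool" where
  "is_rel_density E B \<nu> \<tau> f \<longleftrightarrow> B_measurable E B f \<and> (\<forall>A\<in>B. \<nu> A = ess_sup B \<tau> f A)"

definition strong_abs_cont :: "'a set \<Rightarrow> 'a set set \<Rightarrow> ('a set \<Rightarrow> ennreal) \<Rightarrow> ('a set \<Rightarrow> ennreal) \<Rightarrow> bool" where
  "strong_abs_cont E B \<nu> \<tau> \<longleftrightarrow> (\<exists>f. is_rel_density E B \<nu> \<tau> f)"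

end

theory Submission
  imports Defs
begin

text \<open>For the equivalence, the nontrivial direction builds the density from principality: for
  every level \<open>c\<close> the \<sigma>-ideal \<open>{A. \<nu> A \<le> c}\<close> has an essentially largest element \<open>L c\<close>, and
  \<open>f x = inf {q rational. x \<in> L q}\<close> is a relative density.  Uniqueness: if two densities differ
  on a non-negligible set, they differ by rationals \<open>g \<le> p < q < f\<close> on a non-negligible
  measurable set \<open>A\<close>, and then the two essential suprema on \<open>A\<close> would be separated by \<open>p\<close> and \<open>q\<close>.\<close>

lemma sigma_maxitive_empty: "sigma_maxitive M \<nu> \<Longrightarrow> \<nu> {} = 0"
  unfolding sigma_maxitive_def by blast

lemma sigma_maxitive_Un:
  "sigma_maxitive M \<nu> \<Longrightarrow> A \<in> M \<Longrightarrow> A' \<in> M \<Longrightarrow> \<nu> (A \<union> A') = max (\<nu> A) (\<nu> A')"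
  unfolding sigma_maxitive_def by blast

lemma sigma_maxitive_mono:
  assumes "sigma_maxitive M \<nu>" "A \<in> M" "A' \<in> M" "A \<subseteq> A'"
  shows "\<nu> A \<le> \<nu> A'"
  using sigma_maxitive_Un[OF assms(1-3)] assms(4) by (metis max.cobounded1 sup.absorb2)

lemma negligible_subset: "negligible M \<tau> N \<Longrightarrow> N' \<subseteq> N \<Longrightarrow> negligible M \<tau> N'"
  unfolding negligible_def by blast

lemma ess_sup_le:
  "0 < t \<Longrightarrow> negligible M \<tau> (A \<inter> {x. t < f x}) \<Longrightarrow> ess_sup M \<tau> f A \<le> t"
  unfolding ess_sup_def by (intro Inf_lower) simp

lemma le_ess_sup:
  "(\<And>t. 0 < t \<Longrightarrow> negligible M \<tau> (A \<inter> {x. t < f x}) \<Longrightarrow> c \<le> t) \<Longrightarrow> c \<le> ess_sup M \<tau> f A"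
  unfolding ess_sup_def by (intro Inf_greatest) simp

definition ennreal_rats :: "ennreal set" where
  "ennreal_rats = range (\<lambda>r. ennreal (real_of_rat r))"

lemma countable_ennreal_rats: "countable ennreal_rats"
  unfolding ennreal_rats_def by simp

lemma ennreal_rats_dense: "(x::ennreal) < y \<Longrightarrow> \<exists>q\<in>ennreal_rats. x < q \<and> q < y"
  using ennreal_rat_dense[of x y] unfolding ennreal_rats_def by blast

lemma ennreal_le_by_rats:
  "(\<And>q. q \<in> ennreal_rats \<Longrightarrow> y < q \<Longrightarrow> x \<le> q) \<Longrightarrow> (x::ennreal) \<le> y"
  by (metis ennreal_rats_dense leD not_le_imp_less)

lemma rel_density_abs_cont:
  assumes "is_rel_density \<Omega> M \<nu> \<tau> f"
  shows "abs_cont M \<nu> \<tau>"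
  unfolding abs_cont_def
proof (intro ballI impI)
  fix A assume A: "A \<in> M" "\<tau> A = 0"
  have "ess_sup M \<tau> f A \<le> 0"
  proof (rule dense_ge)
    fix t :: ennreal assume "0 < t"
    moreover have "negligible M \<tau> (A \<inter> {x. t < f x})"
      unfolding negligible_def using A by blast
    ultimately show "ess_sup M \<tau> f A \<le> t" by (rule ess_sup_le)
  qed
  then show "\<nu> A = 0" using assms A unfolding is_rel_density_def by simp
qed

text \<open>Only rational levels enter the density, which keeps all unions countable.\<close>

definition level_density :: "(ennreal \<Rightarrow> 'a set) \<Rightarrow> 'a \<Rightarrow> ennreal" where
  "level_density L x = Inf {q\<in>ennreal_rats. x \<in> L q}"

lemma level_density_le: "q \<in> ennreal_rats \<Longrightarrow> x \<in> L q \<Longrightarrow> level_density L x \<le> q"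
  unfolding level_density_def by (intro Inf_lower) simp

lemma level_density_less_iff:
  "level_density L x < q \<longleftrightarrow> (\<exists>s\<in>ennreal_rats. s < q \<and> x \<in> L s)"
  unfolding level_density_def by (auto simp: Inf_less_iff)

context sigma_algebra
begin

lemma sigma_maxitive_UN_nat_le:
  fixes S :: "nat \<Rightarrow> 'a set"
  assumes sm: "sigma_maxitive M \<nu>" and S: "range S \<subseteq> M" and c: "\<And>n. \<nu> (S n) \<le> c"
  shows "\<nu> (\<Union>n. S n) \<le> c"
proof -
  define H where "H n = (\<Union>k\<le>n. S k)" for n
  have H: "H n \<in> M" for n
    unfolding H_def using S by (intro countable_UN'') auto
  have "\<nu> (H n) \<le> c" for n
  proof (induction n)
    case 0
    then show ?case using c by (simp add: H_def)
  next
    case (Suc n)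
    have "H (Suc n) = H n \<union> S (Suc n)"
      unfolding H_def by (auto simp: atMost_Suc)
    moreover have "S (Suc n) \<in> M" using S by auto
    ultimately show ?case
      using sigma_maxitive_Un[OF sm H[of n]] Suc c by simp
  qed
  moreover have "incseq H"
    unfolding H_def incseq_def by (auto 4 3 intro: order_trans)
  then have "(\<lambda>n. \<nu> (H n)) \<longlonglongrightarrow> \<nu> (\<Union>n. H n)"
    using sm H unfolding sigma_maxitive_def by blast
  ultimately have "\<nu> (\<Union>n. H n) \<le> c"
    by (intro LIMSEQ_le_const2) auto
  moreover have "(\<Union>n. H n) = (\<Union>n. S n)"
    unfolding H_def by auto
  ultimately show ?thesis by simp
qed

lemma sigma_maxitive_countable_UN_le:
  assumes sm: "sigma_maxitive M \<nu>" and I: "countable I"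
    and S: "\<And>i. i \<in> I \<Longrightarrow> S i \<in> M" and c: "\<And>i. i \<in> I \<Longrightarrow> \<nu> (S i) \<le> c"
  shows "\<nu> (\<Union>i\<in>I. S i) \<le> c"
proof (cases "I = {}")
  case True
  then show ?thesis using sigma_maxitive_empty[OF sm] by simp
next
  case False
  have "(\<Union>i\<in>I. S i) = (\<Union>n. S (from_nat_into I n))"
    using range_from_nat_into[OF False I] by (metis image_image)
  also have "\<nu> \<dots> \<le> c"
    using S c from_nat_into[OF False] by (intro sigma_maxitive_UN_nat_le[OF sm]) auto
  finally show ?thesis .
qed

lemma negligible_countable_UN:
  assumes sm: "sigma_maxitive M \<tau>" and I: "countable I"
    and N: "\<And>i. i \<in> I \<Longrightarrow> negligible M \<tau> (N i)"
  shows "negligible M \<tau> (\<Union>i\<in>I. N i)"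
proof -
  obtain G where G: "\<And>i. i \<in> I \<Longrightarrow> G i \<in> M \<and> N i \<subseteq> G i \<and> \<tau> (G i) = 0"
    using N unfolding negligible_def by metis
  have "\<tau> (\<Union>i\<in>I. G i) \<le> 0"
    using G by (intro sigma_maxitive_countable_UN_le[OF sm I]) auto
  moreover have "(\<Union>i\<in>I. G i) \<in> M"
    using G by (intro countable_UN''[OF I]) auto
  ultimately show ?thesis
    unfolding negligible_def using G by (intro bexI[of _ "\<Union>i\<in>I. G i"]) auto
qed

lemma negligible_Un:
  assumes "sigma_maxitive M \<tau>" "negligible M \<tau> N" "negligible M \<tau> N'"
  shows "negligible M \<tau> (N \<union> N')"
  using negligible_countable_UN[OF assms(1), of "{True, False}" "\<lambda>b. if b then N else N'"] assms
  by (simp add: Un_commute)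

lemma rel_density_gap_negligible:
  assumes sm: "sigma_maxitive M \<tau>"
    and f: "is_rel_density \<Omega> M \<nu> \<tau> f" and g: "is_rel_density \<Omega> M \<nu> \<tau> g" and "p < q"
  shows "negligible M \<tau> {x\<in>\<Omega>. g x \<le> p \<and> q < f x}"
proof (rule ccontr)
  define A where "A = {x\<in>\<Omega>. g x \<le> p \<and> q < f x}"
  assume A_not_negligible: "\<not> negligible M \<tau> {x\<in>\<Omega>. g x \<le> p \<and> q < f x}"
  have "A = {x\<in>\<Omega>. q < f x} - {x\<in>\<Omega>. p < g x}"
    unfolding A_def by (auto simp: not_less)
  then have A: "A \<in> M"
    using f g unfolding is_rel_density_def B_measurable_def by auto
  obtain t where t: "p < t" "t < q" using dense[OF \<open>p < q\<close>] by blast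
  have "A \<inter> {x. t < g x} = {}"
    unfolding A_def using t(1) by auto
  moreover have "negligible M \<tau> {}"
    unfolding negligible_def using sigma_maxitive_empty[OF sm] by blast
  ultimately have "ess_sup M \<tau> g A \<le> t"
    using le_less_trans[OF zero_le t(1)] by (intro ess_sup_le) simp_all
  moreover have "q \<le> ess_sup M \<tau> f A"
  proof (rule le_ess_sup)
    fix s assume s: "negligible M \<tau> (A \<inter> {x. s < f x})"
    show "q \<le> s"
    proof (rule ccontr)
      assume "\<not> q \<le> s"
      then have "A \<inter> {x. s < f x} = A"
        unfolding A_def by (auto simp: not_le)
      then show False using s A_not_negligible A_def by simp
    qed
  qed
  moreover have "ess_sup M \<tau> f A = ess_sup M \<tau> g A"
    using f g A unfolding is_rel_density_def by metis
  ultimately show False using t(2) by simp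
qed

lemma rel_density_less_negligible:
  assumes sm: "sigma_maxitive M \<tau>"
    and f: "is_rel_density \<Omega> M \<nu> \<tau> f" and g: "is_rel_density \<Omega> M \<nu> \<tau> g"
  shows "negligible M \<tau> {x\<in>\<Omega>. g x < f x}"
proof -
  let ?gap = "\<lambda>p q. {x\<in>\<Omega>. g x \<le> p \<and> q < f x}"
  have "{x\<in>\<Omega>. g x < f x} \<subseteq> (\<Union>p\<in>ennreal_rats. \<Union>q\<in>{q\<in>ennreal_rats. p < q}. ?gap p q)"
  proof
    fix x assume x: "x \<in> {x\<in>\<Omega>. g x < f x}"
    then obtain p where p: "p \<in> ennreal_rats" "g x < p" "p < f x"
      using ennreal_rats_dense by blast
    then obtain q where q: "q \<in> ennreal_rats" "p < q" "q < f x"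
      using ennreal_rats_dense by blast
    have "x \<in> ?gap p q"
      using x p q by auto
    then show "x \<in> (\<Union>p\<in>ennreal_rats. \<Union>q\<in>{q\<in>ennreal_rats. p < q}. ?gap p q)"
      using p q by blast
  qed
  moreover have "negligible M \<tau> (\<Union>p\<in>ennreal_rats. \<Union>q\<in>{q\<in>ennreal_rats. p < q}. ?gap p q)"
    by (intro negligible_countable_UN[OF sm] countable_ennreal_rats
        countable_subset[OF _ countable_ennreal_rats] rel_density_gap_negligible[OF sm f g]) auto
  ultimately show ?thesis by (rule negligible_subset[rotated])
qed

lemma rel_density_unique_ae:
  assumes sm: "sigma_maxitive M \<tau>"
    and f: "is_rel_density \<Omega> M \<nu> \<tau> f" and g: "is_rel_density \<Omega> M \<nu> \<tau> g"
  shows "negligible M \<tau> {x\<in>\<Omega>. f x \<noteq> g x}"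
proof -
  have "{x\<in>\<Omega>. f x \<noteq> g x} = {x\<in>\<Omega>. g x < f x} \<union> {x\<in>\<Omega>. f x < g x}"
    by (auto simp: neq_iff)
  then show ?thesis
    using negligible_Un[OF sm rel_density_less_negligible[OF sm f g]
        rel_density_less_negligible[OF sm g f]] by simp
qed

lemma sublevel_sigma_ideal:
  assumes sm: "sigma_maxitive M \<nu>"
  shows "sigma_ideal M {A\<in>M. \<nu> A \<le> c}"
  unfolding sigma_ideal_def
proof (intro conjI allI impI ballI)
  have "{} \<in> {A\<in>M. \<nu> A \<le> c}"
    using sigma_maxitive_empty[OF sm] by simp
  then show "{A\<in>M. \<nu> A \<le> c} \<noteq> {}" by auto
  fix S :: "nat \<Rightarrow> 'a set" assume "range S \<subseteq> {A\<in>M. \<nu> A \<le> c}"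
  then show "(\<Union>n. S n) \<in> {A\<in>M. \<nu> A \<le> c}"
    using sigma_maxitive_UN_nat_le[OF sm, of S c] by auto
next
  fix A J assume "A \<in> M" "J \<in> {A\<in>M. \<nu> A \<le> c}" "A \<subseteq> J"
  then show "A \<in> {A\<in>M. \<nu> A \<le> c}"
    using sigma_maxitive_mono[OF sm, of A J] by auto
qed auto

lemma sigma_principal_sublevel_sets:
  assumes sm: "sigma_maxitive M \<nu>" and principal: "sigma_principal M \<tau>"
  obtains L where "\<And>c. L c \<in> M" "\<And>c. \<nu> (L c) \<le> c"
    "\<And>c S. S \<in> M \<Longrightarrow> \<nu> S \<le> c \<Longrightarrow> negligible M \<tau> (S - L c)"
proof -
  have "\<exists>L. L \<in> M \<and> \<nu> L \<le> c \<and> (\<forall>S\<in>M. \<nu> S \<le> c \<longrightarrow> negligible M \<tau> (S - L))" for c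
  proof -
    let ?I = "{A\<in>M. \<nu> A \<le> c}"
    have "\<exists>L\<in>?I. \<forall>S\<in>?I. negligible M \<tau> (S - L)"
      using mp[OF spec[OF principal[unfolded sigma_principal_def], of ?I] sublevel_sigma_ideal[OF sm]] .
    then show ?thesis by auto
  qed
  then obtain L where
    L: "\<forall>c. L c \<in> M \<and> \<nu> (L c) \<le> c \<and> (\<forall>S\<in>M. \<nu> S \<le> c \<longrightarrow> negligible M \<tau> (S - L c))"
    using choice[of "\<lambda>c L. L \<in> M \<and> \<nu> L \<le> c \<and> (\<forall>S\<in>M. \<nu> S \<le> c \<longrightarrow> negligible M \<tau> (S - L))"]
    by auto
  show ?thesis
    by (rule that[of L]) (use L in auto)
qed

lemma level_density_measurable:
  assumes L: "\<And>c. L c \<in> M"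
  shows "B_measurable \<Omega> M (level_density L)"
  unfolding B_measurable_def
proof
  fix t :: ennreal
  let ?U = "\<lambda>q. \<Union>s\<in>{s\<in>ennreal_rats. s < q}. L s"
  have U: "?U q \<in> M" for q
    using L by (intro countable_UN'' countable_subset[OF _ countable_ennreal_rats]) auto
  have "{x\<in>\<Omega>. t < level_density L x} = (\<Union>q\<in>{q\<in>ennreal_rats. t < q}. \<Omega> - ?U q)"
  proof (intro equalityI subsetI)
    fix x assume x: "x \<in> {x\<in>\<Omega>. t < level_density L x}"
    then obtain q where q: "q \<in> ennreal_rats" "t < q" "q < level_density L x"
      using ennreal_rats_dense by blast
    have "x \<notin> ?U q"
    proof
      assume "x \<in> ?U q"
      then obtain s where "s \<in> ennreal_rats" "s < q" "x \<in> L s" by blast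
      then have "level_density L x < q"
        using level_density_le[of s x L] by (meson le_less_trans)
      then show False using q(3) by simp
    qed
    then show "x \<in> (\<Union>q\<in>{q\<in>ennreal_rats. t < q}. \<Omega> - ?U q)"
      using x q by blast
  next
    fix x assume "x \<in> (\<Union>q\<in>{q\<in>ennreal_rats. t < q}. \<Omega> - ?U q)"
    then obtain q where q: "t < q" "x \<in> \<Omega>" "x \<notin> ?U q" by blast
    have "t < level_density L x"
    proof (rule ccontr)
      assume "\<not> t < level_density L x"
      then have "level_density L x < q" using q(1) by (simp add: not_less le_less_trans)
      then obtain s where "s \<in> ennreal_rats" "s < q" "x \<in> L s"
        unfolding level_density_less_iff by blast
      then show False using q(3) by blast
    qed
    then show "x \<in> {x\<in>\<Omega>. t < level_density L x}" using q(2) by simp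
  qed
  moreover have "(\<Union>q\<in>{q\<in>ennreal_rats. t < q}. \<Omega> - ?U q) \<in> M"
    using L by (intro countable_UN'' countable_subset[OF _ countable_ennreal_rats] Diff top) auto
  ultimately show "{x\<in>\<Omega>. t < level_density L x} \<in> M" by simp
qed

lemma level_density_ess_sup_le:
  assumes L_large: "\<And>c S. S \<in> M \<Longrightarrow> \<nu> S \<le> c \<Longrightarrow> negligible M \<tau> (S - L c)" and A: "A \<in> M"
  shows "ess_sup M \<tau> (level_density L) A \<le> \<nu> A"
proof (rule ennreal_le_by_rats)
  fix q assume q: "q \<in> ennreal_rats" "\<nu> A < q"
  have "A \<inter> {x. q < level_density L x} \<subseteq> A - L q"
    using level_density_le[OF q(1), where L = L] by (auto dest: leD)
  moreover have "negligible M \<tau> (A - L q)"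
    using L_large[OF A] q(2) by simp
  ultimately have "negligible M \<tau> (A \<inter> {x. q < level_density L x})"
    by (rule negligible_subset[rotated])
  then show "ess_sup M \<tau> (level_density L) A \<le> q"
    using q(2) by (intro ess_sup_le) (auto intro: le_less_trans)
qed

lemma level_density_ess_sup_ge:
  assumes sm\<nu>: "sigma_maxitive M \<nu>" and sm\<tau>: "sigma_maxitive M \<tau>" and ac: "abs_cont M \<nu> \<tau>"
    and L: "\<And>c. L c \<in> M" and L_level: "\<And>c. \<nu> (L c) \<le> c" and A: "A \<in> M"
  shows "\<nu> A \<le> ess_sup M \<tau> (level_density L) A"
proof (rule le_ess_sup)
  fix t assume "negligible M \<tau> (A \<inter> {x. t < level_density L x})"
  then obtain G where G: "G \<in> M" "A \<inter> {x. t < level_density L x} \<subseteq> G" "\<tau> G = 0"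
    unfolding negligible_def by blast
  have "\<tau> (A \<inter> G) \<le> \<tau> G"
    using A G by (intro sigma_maxitive_mono[OF sm\<tau>]) auto
  then have null: "\<nu> (A \<inter> G) = 0"
    using ac A G unfolding abs_cont_def by auto
  have "\<nu> (A - G) \<le> t"
  proof (rule dense_ge)
    fix q assume "t < q"
    let ?U = "\<Union>s\<in>{s\<in>ennreal_rats. s < q}. L s"
    have U: "?U \<in> M"
      using L by (intro countable_UN'' countable_subset[OF _ countable_ennreal_rats]) auto
    have "A - G \<subseteq> ?U"
    proof
      fix x assume "x \<in> A - G"
      then have "level_density L x \<le> t" using G(2) by (auto simp: not_less)
      then have "level_density L x < q" using \<open>t < q\<close> by (rule le_less_trans)
      then show "x \<in> ?U" unfolding level_density_less_iff by blast
    qed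
    then have "\<nu> (A - G) \<le> \<nu> ?U"
      using A G U by (intro sigma_maxitive_mono[OF sm\<nu>]) auto
    also have "\<nu> ?U \<le> q"
      using L L_level by (intro sigma_maxitive_countable_UN_le[OF sm\<nu>]
          countable_subset[OF _ countable_ennreal_rats]) (auto intro: order_trans[OF L_level] less_imp_le)
    finally show "\<nu> (A - G) \<le> q" .
  qed
  have "\<nu> A = \<nu> (A \<inter> G \<union> (A - G))"
    by (simp add: Int_Diff_Un)
  also have "\<dots> = max (\<nu> (A \<inter> G)) (\<nu> (A - G))"
    using A G by (intro sigma_maxitive_Un[OF sm\<nu>]) auto
  finally show "\<nu> A \<le> t" using null \<open>\<nu> (A - G) \<le> t\<close> by simp
qed

lemma abs_cont_imp_strong_abs_cont:
  assumes sm\<nu>: "sigma_maxitive M \<nu>" and sm\<tau>: "sigma_maxitive M \<tau>"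
    and principal: "sigma_principal M \<tau>" and ac: "abs_cont M \<nu> \<tau>"
  shows "strong_abs_cont \<Omega> M \<nu> \<tau>"
proof -
  obtain L where L: "\<And>c. L c \<in> M" and L_level: "\<And>c. \<nu> (L c) \<le> c"
    and L_large: "\<And>c S. S \<in> M \<Longrightarrow> \<nu> S \<le> c \<Longrightarrow> negligible M \<tau> (S - L c)"
    using sigma_principal_sublevel_sets[OF sm\<nu> principal] by metis
  have density: "\<nu> A = ess_sup M \<tau> (level_density L) A" if A: "A \<in> M" for A
  proof (rule antisym)
    show "\<nu> A \<le> ess_sup M \<tau> (level_density L) A"
      by (rule level_density_ess_sup_ge[OF sm\<nu> sm\<tau> ac L L_level A])
    show "ess_sup M \<tau> (level_density L) A \<le> \<nu> A"
      by (rule level_density_ess_sup_le[OF L_large A])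
  qed
  show ?thesis
    unfolding strong_abs_cont_def
  proof
    show "is_rel_density \<Omega> M \<nu> \<tau> (level_density L)"
      unfolding is_rel_density_def
    proof (intro conjI ballI)
      show "B_measurable \<Omega> M (level_density L)"
        by (rule level_density_measurable[OF L])
      show "\<nu> A = ess_sup M \<tau> (level_density L) A" if "A \<in> M" for A
        using that by (rule density)
    qed
  qed
qed

end

theorem corollary5p6:
  fixes E :: "'a set" and B :: "'a set set" and \<nu> \<tau> :: "'a set \<Rightarrow> ennreal"
  assumes "E \<noteq> {}" and "sigma_algebra E B"
    and "sigma_maxitive B \<nu>" and "sigma_maxitive B \<tau>"
    and "sigma_principal B \<tau>"
  shows "(abs_cont B \<nu> \<tau> \<longleftrightarrow> strong_abs_cont E B \<nu> \<tau>) \<and>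
         (\<forall>f g. is_rel_density E B \<nu> \<tau> f \<longrightarrow> is_rel_density E B \<nu> \<tau> g \<longrightarrow>
                negligible B \<tau> {x\<in>E. f x \<noteq> g x})"
proof (intro conjI iffI allI impI)
  show "strong_abs_cont E B \<nu> \<tau>" if "abs_cont B \<nu> \<tau>"
    using sigma_algebra.abs_cont_imp_strong_abs_cont[OF assms(2-5) that] .
  show "abs_cont B \<nu> \<tau>" if strong: "strong_abs_cont E B \<nu> \<tau>"
  proof -
    obtain f where "is_rel_density E B \<nu> \<tau> f"
      using strong unfolding strong_abs_cont_def ..
    then show ?thesis by (rule rel_density_abs_cont)
  qed
  show "negligible B \<tau> {x\<in>E. f x \<noteq> g x}"
    if "is_rel_density E B \<nu> \<tau> f" "is_rel_density E B \<nu> \<tau> g" for f g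
    using sigma_algebra.rel_density_unique_ae[OF assms(2,4) that] .
qed

end
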